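(* Let $(D_-,D_+,H)$ be a periodic upwind DP SBP triple, $D=\tfrac12(D_++D_-)$, $g>0$, and $\gamma_1,\gamma_2\ge0$. Let $\mathbf h,\mathbf m:[0,T]\to\mathbb{R}^N$ be differentiable with $h_j(t)>0$ for all $j,t$, and set $\mathbf u=\mathbf m/\mathbf h$ (entrywise). Suppose $\mathbf U=(\mathbf h;\mathbf m)$ satisfies the semi-discrete shallow water scheme $$\partial_t\mathbf h+D(\mathbf h\circ\mathbf u)=\tfrac{\gamma_1}{2}(D_+-D_-)\mathbf g_1,\qquad \partial_t\mathbf m+\tfrac12 D(\mathbf h\circ\mathbf u\circ\mathbf u)+\tfrac12\mathbf u\circ D(\mathbf h\circ\mathbf u)+\tfrac12(\mathbf h\circ\mathbf u)\circ D\mathbf u+g\,\mathbf h\circ D\mathbf h=\tfrac{\gamma_2}{2}(D_+-D_-)\mathbf g_2,$$ where $\mathbf g_1=g\mathbf h-\tfrac12\mathbf u\circ\mathbf u$, $\mathbf g_2=\mathbf u$. Let $E_h(t)=\sum_{j=1}^N h_j^{H}\big(\tfrac12 h_j u_j^2+\tfrac12 g h_j^2\big)$ where $h^H_j$ are the diagonal entries of $H$. Then (1) $\frac{d}{dt}E_h=\tfrac12\sum_{i=1}^2\gamma_i\langle\mathbf g_i,(D_+-D_-)\mathbf g_i\rangle_H\le0$, with $E_h$ constant if $\gamma_1=\gamma_2=0$; (2) $\frac{d}{dt}\langle\mathbf 1,\mathbf h\rangle_H=0$ and $\frac{d}{dt}\langle\mathbf 1,\mathbf m\rangle_H=0$ (total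 mass and total momentum are conserved).
   Context: Fix $N\ge2$, $H=\mathrm{diag}(h^H_1,\dots,h^H_N)$ with $h^H_j>0$, $\langle \mathbf f,\mathbf g\rangle_H=\mathbf f^TH\mathbf g$, $\mathbf 1=(1,\dots,1)^T\in\mathbb{R}^N$; $\circ$ is the entrywise product. A triple $(D_-,D_+,H)$ with $D_\pm\in\mathbb{R}^{N\times N}$ is a periodic upwind DP SBP triple if (i) $\langle D_+\mathbf f,\mathbf g\rangle_H+\langle \mathbf f,D_-\mathbf g\rangle_H=0$ for all $\mathbf f,\mathbf g\in\mathbb{R}^N$; (ii) $\langle \mathbf f,(D_+-D_-)\mathbf f\rangle_H\le0$ for all $\mathbf f\in\mathbb{R}^N$; (iii) $D_+\mathbf 1=D_-\mathbf 1=\mathbf 0$. Here $\mathbf h$ is the water height, $\mathbf m=\mathbf h\circ\mathbf u$ the momentum, $g$ the gravitational constant. *)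

theory Defs
  imports "HOL-Analysis.Analysis"
begin

text \<open>Vectors in R^N are real^'n with CARD('n) = N; matrices are real^'n^'n acting by *v.
  The diagonal norm matrix H is represented by its diagonal entries hH.\<close>

definition ipH :: "real^'n \<Rightarrow> real^'n \<Rightarrow> real^'n \<Rightarrow> real" where
  "ipH hH f g = (\<Sum>j\<in>UNIV. f $ j * hH $ j * g $ j)"

definition had :: "real^'n \<Rightarrow> real^'n \<Rightarrow> real^'n" (infixl "\<circ>\<^sub>e" 70) where
  "had f g = (\<chi> j. f $ j * g $ j)"

definition ediv :: "real^'n \<Rightarrow> real^'n \<Rightarrow> real^'n" where
  "ediv f g = (\<chi> j. f $ j / g $ j)"

definition ones :: "real^'n" where
  "ones = (\<chi> j. 1)"

definition periodic_upwind_SBP :: "real^'n^'n \<Rightarrow> real^'n^'n \<Rightarrow> real^'n \<Rightarrow> bool" where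
  "periodic_upwind_SBP Dm Dp hH \<longleftrightarrow>
     (\<forall>j. hH $ j > 0) \<and>
     (\<forall>f g. ipH hH (Dp *v f) g + ipH hH f (Dm *v g) = 0) \<and>
     (\<forall>f. ipH hH f ((Dp - Dm) *v f) \<le> 0) \<and>
     Dp *v ones = 0 \<and> Dm *v ones = 0"

end

theory Submission
  imports Defs
begin

text \<open>The energy is differentiated in the entropy variables: its rate is
  \<open>\<langle>u, \<partial>\<^sub>t m\<rangle>\<^sub>H + \<langle>g h - u\<^sup>2/2, \<partial>\<^sub>t h\<rangle>\<^sub>H\<close> with \<open>u = m/h\<close>. Substituting the scheme, every term
  built from the central operator \<open>D = (D\<^sub>+ + D\<^sub>-)/2\<close> cancels, because the SBP property makes
  \<open>D\<close> skew-adjoint in \<open>\<langle>\<cdot>,\<cdot>\<rangle>\<^sub>H\<close> and the split form of the momentum flux is arranged so that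
  the terms pair off; only the dissipation terms \<open>\<gamma>\<^sub>i/2 \<langle>g\<^sub>i, (D\<^sub>+ - D\<^sub>-) g\<^sub>i\<rangle>\<^sub>H \<le> 0\<close> remain.
  Mass and momentum are conserved since \<open>\<one>\<close> is in the kernel of \<open>D\<^sub>\<plusminus>\<close>, so by the SBP
  property it is \<open>H\<close>-orthogonal to the range of \<open>D\<^sub>\<plusminus>\<close>.\<close>

lemma ipH_add_right [simp]: "ipH w c (a + b) = ipH w c a + ipH w c b"
  by (simp add: ipH_def sum.distrib distrib_left)

lemma ipH_diff_left [simp]: "ipH w (a - b) c = ipH w a c - ipH w b c"
  by (simp add: ipH_def sum_subtractf left_diff_distrib)

lemma ipH_diff_right [simp]: "ipH w c (a - b) = ipH w c a - ipH w c b"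
  by (simp add: ipH_def sum_subtractf right_diff_distrib)

lemma ipH_scaleR_left [simp]: "ipH w (k *\<^sub>R a) c = k * ipH w a c"
  by (simp add: ipH_def sum_distrib_left mult.assoc)

lemma ipH_scaleR_right [simp]: "ipH w c (k *\<^sub>R a) = k * ipH w c a"
  by (simp add: ipH_def sum_distrib_left algebra_simps)

lemma ipH_zero_left [simp]: "ipH w 0 a = 0"
  by (simp add: ipH_def)

lemma ipH_zero_right [simp]: "ipH w a 0 = 0"
  by (simp add: ipH_def)

lemma ipH_commute: "ipH w a b = ipH w b a"
  by (simp add: ipH_def mult.commute mult.left_commute)

lemma ipH_had_right: "ipH w a (b \<circ>\<^sub>e c) = ipH w (a \<circ>\<^sub>e b) c"
  by (simp add: ipH_def had_def mult.commute mult.left_commute)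

lemma ipH_ones_had: "ipH w ones (a \<circ>\<^sub>e b) = ipH w a b"
  by (simp add: ipH_def had_def ones_def mult.commute mult.left_commute)

lemma had_commute: "a \<circ>\<^sub>e b = b \<circ>\<^sub>e a"
  by (simp add: had_def mult.commute)

lemma has_real_derivative_vec_nth:
  fixes f :: "real \<Rightarrow> real^'n"
  assumes "(f has_vector_derivative f') F"
  shows "((\<lambda>s. f s $ j) has_real_derivative f' $ j) F"
  using bounded_linear.has_vector_derivative[OF bounded_linear_vec_nth assms]
  by (simp add: has_real_derivative_iff_has_vector_derivative)

lemma has_real_derivative_ipH:
  fixes f :: "real \<Rightarrow> real^'n"
  assumes "(f has_vector_derivative f') (at t within S)"
  shows "((\<lambda>s. ipH w a (f s)) has_real_derivative ipH w a f') (at t within S)"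
  unfolding ipH_def
  by (rule DERIV_sum, rule DERIV_cmult, rule has_real_derivative_vec_nth[OF assms])

lemma has_real_derivative_energy_density:
  fixes h m :: "real \<Rightarrow> real"
  assumes "(h has_real_derivative h') (at x within S)"
    and "(m has_real_derivative m') (at x within S)"
    and "h x \<noteq> 0"
  shows "((\<lambda>s. (1/2) * h s * (m s / h s)^2 + (1/2) * g * (h s)^2) has_real_derivative
      (m x / h x) * m' + (g * h x - (1/2) * (m x / h x)^2) * h') (at x within S)"
proof -
  have "((\<lambda>s. (1/2) * h s * (m s / h s)^2 + (1/2) * g * (h s)^2) has_real_derivative
      (1/2) * h' * (m x / h x)^2
      + (1/2) * h x * (2 * (m x / h x) * ((m' * h x - m x * h') / (h x * h x)))
      + (1/2) * g * (2 * h x * h')) (at x within S)"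
    using assms by (auto intro!: derivative_eq_intros)
  also have "(1/2) * h' * (m x / h x)^2
      + (1/2) * h x * (2 * (m x / h x) * ((m' * h x - m x * h') / (h x * h x)))
      + (1/2) * g * (2 * h x * h')
      = (m x / h x) * m' + (g * h x - (1/2) * (m x / h x)^2) * h'"
    using \<open>h x \<noteq> 0\<close> by (simp add: field_simps power2_eq_square)
  finally show ?thesis .
qed

lemma has_real_derivative_shallow_water_energy:
  fixes h m :: "real \<Rightarrow> real^'n"
  assumes "(h has_vector_derivative h') (at t within S)"
    and "(m has_vector_derivative m') (at t within S)"
    and "\<And>j. h t $ j \<noteq> 0"
  defines "u \<equiv> ediv (m t) (h t)"
  shows "((\<lambda>s. \<Sum>j\<in>UNIV. w $ j *
            ((1/2) * h s $ j * (ediv (m s) (h s) $ j)^2 + (1/2) * g * (h s $ j)^2))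
          has_real_derivative ipH w u m' + ipH w (g *\<^sub>R h t - (1/2) *\<^sub>R (u \<circ>\<^sub>e u)) h')
         (at t within S)"
proof -
  have "((\<lambda>s. \<Sum>j\<in>UNIV. w $ j *
            ((1/2) * h s $ j * (ediv (m s) (h s) $ j)^2 + (1/2) * g * (h s $ j)^2))
          has_real_derivative (\<Sum>j\<in>UNIV. w $ j *
            ((m t $ j / h t $ j) * m' $ j + (g * h t $ j - (1/2) * (m t $ j / h t $ j)^2) * h' $ j)))
         (at t within S)"
    unfolding ediv_def vec_lambda_beta
    by (intro DERIV_sum DERIV_cmult has_real_derivative_energy_density
        has_real_derivative_vec_nth assms)
  moreover have "(\<Sum>j\<in>UNIV. w $ j *
            ((m t $ j / h t $ j) * m' $ j + (g * h t $ j - (1/2) * (m t $ j / h t $ j)^2) * h' $ j))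
      = ipH w u m' + ipH w (g *\<^sub>R h t - (1/2) *\<^sub>R (u \<circ>\<^sub>e u)) h'"
    unfolding ipH_def u_def ediv_def had_def sum.distrib[symmetric]
    by (intro sum.cong refl) (simp add: algebra_simps power2_eq_square)
  ultimately show ?thesis
    by simp
qed

definition skew_adjoint :: "real^'n \<Rightarrow> real^'n^'n \<Rightarrow> bool" where
  "skew_adjoint w D \<longleftrightarrow> (\<forall>f k. ipH w (D *v f) k = - ipH w f (D *v k))"

lemma skew_adjointD: "skew_adjoint w D \<Longrightarrow> ipH w (D *v f) k = - ipH w f (D *v k)"
  by (simp add: skew_adjoint_def)

lemma skew_adjoint_ipH_self: "skew_adjoint w D \<Longrightarrow> ipH w f (D *v f) = 0"
  using skew_adjointD[of w D f f] by (simp add: ipH_commute)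

lemma skew_adjoint_ipH_ones:
  assumes "skew_adjoint w D" and "D *v ones = 0"
  shows "ipH w ones (D *v f) = 0"
  using skew_adjointD[OF assms(1), of ones f] assms(2) by simp

lemma central_mult_vec:
  "((1/2) *\<^sub>R (Dp + Dm)) *v (f::real^'n) = (1/2) *\<^sub>R (Dp *v f) + (1/2) *\<^sub>R (Dm *v f)"
  by (simp add: scaleR_matrix_vector_assoc[symmetric] matrix_vector_mult_add_rdistrib
      scaleR_right_distrib)

lemma periodic_upwind_SBP_skew_adjoint_central:
  assumes "periodic_upwind_SBP Dm Dp w"
  shows "skew_adjoint w ((1/2) *\<^sub>R (Dp + Dm))"
proof -
  have SBP: "ipH w (Dp *v f) k + ipH w f (Dm *v k) = 0" for f k
    using assms by (simp add: periodic_upwind_SBP_def)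
  show ?thesis
  proof (unfold skew_adjoint_def, intro allI)
    fix f k
    show "ipH w (((1/2) *\<^sub>R (Dp + Dm)) *v f) k = - ipH w f (((1/2) *\<^sub>R (Dp + Dm)) *v k)"
      using SBP[of f k] SBP[of k f] by (simp add: central_mult_vec ipH_commute)
  qed
qed

lemma periodic_upwind_SBP_central_ones:
  "periodic_upwind_SBP Dm Dp w \<Longrightarrow> ((1/2) *\<^sub>R (Dp + Dm)) *v ones = 0"
  by (simp add: periodic_upwind_SBP_def central_mult_vec)

lemma periodic_upwind_SBP_ipH_ones_upwind_diff:
  assumes "periodic_upwind_SBP Dm Dp w"
  shows "ipH w ones ((Dp - Dm) *v f) = 0"
proof -
  have SBP: "ipH w (Dp *v f) k + ipH w f (Dm *v k) = 0" for f k
    using assms by (simp add: periodic_upwind_SBP_def)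
  have "Dp *v ones = 0" and "Dm *v ones = 0"
    using assms by (simp_all add: periodic_upwind_SBP_def)
  then have "ipH w ones (Dp *v f) = 0" and "ipH w ones (Dm *v f) = 0"
    using SBP[of f ones] SBP[of ones f] by (simp_all add: ipH_commute[of w ones])
  then show ?thesis
    by (simp add: matrix_vector_mult_diff_rdistrib)
qed

lemma skew_adjoint_energy_rate:
  assumes D: "skew_adjoint w D"
    and eq_h: "h' + D *v (h \<circ>\<^sub>e u) = a"
    and eq_m: "m' + (1/2) *\<^sub>R (D *v (h \<circ>\<^sub>e u \<circ>\<^sub>e u)) + (1/2) *\<^sub>R (u \<circ>\<^sub>e (D *v (h \<circ>\<^sub>e u)))
        + (1/2) *\<^sub>R ((h \<circ>\<^sub>e u) \<circ>\<^sub>e (D *v u)) + g *\<^sub>R (h \<circ>\<^sub>e (D *v h)) = b"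
  defines "G \<equiv> g *\<^sub>R h - (1/2) *\<^sub>R (u \<circ>\<^sub>e u)"
  shows "ipH w u m' + ipH w G h' = ipH w u b + ipH w G a"
proof -
  let ?hu = "h \<circ>\<^sub>e u"
  have h'_eq: "h' = a - D *v ?hu"
    using eq_h by (auto simp: algebra_simps)
  have m'_eq: "m' = b - (1/2) *\<^sub>R (D *v (?hu \<circ>\<^sub>e u)) - (1/2) *\<^sub>R (u \<circ>\<^sub>e (D *v ?hu))
      - (1/2) *\<^sub>R (?hu \<circ>\<^sub>e (D *v u)) - g *\<^sub>R (h \<circ>\<^sub>e (D *v h))"
    using eq_m by (auto simp: algebra_simps)
  \<comment> \<open>\<open>a1\<close> and \<open>a3\<close> cancel; \<open>a2\<close> and \<open>a4\<close> cancel against the two parts of \<open>\<langle>G, D (h u)\<rangle>\<close>\<close>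
  have a1: "ipH w u (D *v (?hu \<circ>\<^sub>e u)) = - ipH w (D *v u) (?hu \<circ>\<^sub>e u)"
    using skew_adjointD[OF D, of u "?hu \<circ>\<^sub>e u"] by simp
  have a2: "ipH w u (u \<circ>\<^sub>e (D *v ?hu)) = ipH w (u \<circ>\<^sub>e u) (D *v ?hu)"
    by (rule ipH_had_right)
  have a3: "ipH w u (?hu \<circ>\<^sub>e (D *v u)) = ipH w (D *v u) (?hu \<circ>\<^sub>e u)"
    by (simp add: ipH_had_right had_commute[of u] ipH_commute[of _ _ "D *v u"])
  have a4: "ipH w u (h \<circ>\<^sub>e (D *v h)) = - ipH w h (D *v ?hu)"
    using skew_adjointD[OF D, of h ?hu]
    by (simp add: ipH_had_right had_commute[of u] ipH_commute[of _ _ "D *v h"])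
  have G: "ipH w G (D *v ?hu) = g * ipH w h (D *v ?hu) - (1/2) * ipH w (u \<circ>\<^sub>e u) (D *v ?hu)"
    unfolding G_def by simp
  show ?thesis
    unfolding h'_eq m'_eq ipH_diff_right ipH_scaleR_right a1 a2 a3 a4 G
    by (simp add: algebra_simps)
qed

lemma skew_adjoint_conservation:
  assumes D: "skew_adjoint w D" and ones: "D *v ones = 0"
    and eq_h: "h' + D *v (h \<circ>\<^sub>e u) = a"
    and eq_m: "m' + (1/2) *\<^sub>R (D *v (h \<circ>\<^sub>e u \<circ>\<^sub>e u)) + (1/2) *\<^sub>R (u \<circ>\<^sub>e (D *v (h \<circ>\<^sub>e u)))
        + (1/2) *\<^sub>R ((h \<circ>\<^sub>e u) \<circ>\<^sub>e (D *v u)) + g *\<^sub>R (h \<circ>\<^sub>e (D *v h)) = b"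
  shows "ipH w ones h' = ipH w ones a" and "ipH w ones m' = ipH w ones b"
proof -
  note D_ones = skew_adjoint_ipH_ones[OF D ones]
  show "ipH w ones h' = ipH w ones a"
    using arg_cong[OF eq_h, of "ipH w ones"] by (simp add: D_ones)
  have "ipH w (D *v u) (h \<circ>\<^sub>e u) = - ipH w u (D *v (h \<circ>\<^sub>e u))"
    by (rule skew_adjointD[OF D])
  then show "ipH w ones m' = ipH w ones b"
    using arg_cong[OF eq_m, of "ipH w ones"] skew_adjoint_ipH_self[OF D, of h]
    by (simp add: D_ones ipH_ones_had ipH_commute[of _ _ "D *v u"])
qed

lemma periodic_upwind_SBP_scheme_rates:
  fixes h m h' m' :: "real^'n" and g \<gamma>1 \<gamma>2 :: real
  assumes SBP: "periodic_upwind_SBP Dm Dp w"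
  defines "D \<equiv> (1/2) *\<^sub>R (Dp + Dm)" and "u \<equiv> ediv m h"
  defines "G1 \<equiv> g *\<^sub>R h - (1/2) *\<^sub>R (u \<circ>\<^sub>e u)"
  assumes eq_h: "h' + D *v (h \<circ>\<^sub>e u) = (\<gamma>1 / 2) *\<^sub>R ((Dp - Dm) *v G1)"
    and eq_m: "m' + (1/2) *\<^sub>R (D *v (h \<circ>\<^sub>e u \<circ>\<^sub>e u)) + (1/2) *\<^sub>R (u \<circ>\<^sub>e (D *v (h \<circ>\<^sub>e u)))
        + (1/2) *\<^sub>R ((h \<circ>\<^sub>e u) \<circ>\<^sub>e (D *v u)) + g *\<^sub>R (h \<circ>\<^sub>e (D *v h))
        = (\<gamma>2 / 2) *\<^sub>R ((Dp - Dm) *v u)"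
  shows "ipH w u m' + ipH w G1 h'
      = (1/2) * (\<gamma>1 * ipH w G1 ((Dp - Dm) *v G1) + \<gamma>2 * ipH w u ((Dp - Dm) *v u))"
    and "ipH w ones h' = 0" and "ipH w ones m' = 0"
proof -
  have skew: "skew_adjoint w D" and D_ones: "D *v ones = 0"
    unfolding D_def using periodic_upwind_SBP_skew_adjoint_central[OF SBP]
      periodic_upwind_SBP_central_ones[OF SBP] by blast+
  show "ipH w u m' + ipH w G1 h'
      = (1/2) * (\<gamma>1 * ipH w G1 ((Dp - Dm) *v G1) + \<gamma>2 * ipH w u ((Dp - Dm) *v u))"
    using skew_adjoint_energy_rate[OF skew eq_h eq_m] unfolding G1_def
    by (simp add: algebra_simps)
  show "ipH w ones h' = 0" and "ipH w ones m' = 0"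
    using skew_adjoint_conservation[OF skew D_ones eq_h eq_m]
    by (simp_all add: periodic_upwind_SBP_ipH_ones_upwind_diff[OF SBP])
qed

theorem mainTheorem10:
  fixes Dm Dp :: "real^'n^'n" and hH :: "real^'n"
    and g \<gamma>1 \<gamma>2 T :: real
    and h m h' m' :: "real \<Rightarrow> real^'n"
  assumes N: "CARD('n) \<ge> 2"
    and SBP: "periodic_upwind_SBP Dm Dp hH"
    and g: "g > 0" and g1: "\<gamma>1 \<ge> 0" and g2: "\<gamma>2 \<ge> 0"
    and T: "T > 0"
    and dh: "\<And>t. t \<in> {0..T} \<Longrightarrow> (h has_vector_derivative h' t) (at t within {0..T})"
    and dm: "\<And>t. t \<in> {0..T} \<Longrightarrow> (m has_vector_derivative m' t) (at t within {0..T})"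
    and pos: "\<And>t j. t \<in> {0..T} \<Longrightarrow> h t $ j > 0"
    and eq_h: "\<And>t. t \<in> {0..T} \<Longrightarrow>
       (let D = (1/2) *\<^sub>R (Dp + Dm); u = ediv (m t) (h t);
            G1 = g *\<^sub>R h t - (1/2) *\<^sub>R (u \<circ>\<^sub>e u)
        in h' t + D *v (h t \<circ>\<^sub>e u) = (\<gamma>1 / 2) *\<^sub>R ((Dp - Dm) *v G1))"
    and eq_m: "\<And>t. t \<in> {0..T} \<Longrightarrow>
       (let D = (1/2) *\<^sub>R (Dp + Dm); u = ediv (m t) (h t); G2 = u
        in m' t + (1/2) *\<^sub>R (D *v (h t \<circ>\<^sub>e u \<circ>\<^sub>e u))
               + (1/2) *\<^sub>R (u \<circ>\<^sub>e (D *v (h t \<circ>\<^sub>e u)))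
               + (1/2) *\<^sub>R ((h t \<circ>\<^sub>e u) \<circ>\<^sub>e (D *v u))
               + g *\<^sub>R (h t \<circ>\<^sub>e (D *v h t))
           = (\<gamma>2 / 2) *\<^sub>R ((Dp - Dm) *v G2))"
  defines "E \<equiv> \<lambda>t. \<Sum>j\<in>UNIV. hH $ j *
             ((1/2) * h t $ j * (ediv (m t) (h t) $ j)^2 + (1/2) * g * (h t $ j)^2)"
  shows "(\<forall>t\<in>{0..T}.
            (let u = ediv (m t) (h t);
                 G1 = g *\<^sub>R h t - (1/2) *\<^sub>R (u \<circ>\<^sub>e u); G2 = u;
                 dE = (1/2) * (\<gamma>1 * ipH hH G1 ((Dp - Dm) *v G1)
                              + \<gamma>2 * ipH hH G2 ((Dp - Dm) *v G2))
             in (E has_real_derivative dE) (at t within {0..T}) \<and> dE \<le> 0))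
       \<and> (\<gamma>1 = 0 \<and> \<gamma>2 = 0 \<longrightarrow> (\<forall>t\<in>{0..T}. E t = E 0))
       \<and> (\<forall>t\<in>{0..T}. ((\<lambda>s. ipH hH ones (h s)) has_real_derivative 0) (at t within {0..T})
                     \<and> ((\<lambda>s. ipH hH ones (m s)) has_real_derivative 0) (at t within {0..T}))"
proof -
  define u where "u t = ediv (m t) (h t)" for t
  define G1 where "G1 t = g *\<^sub>R h t - (1/2) *\<^sub>R (u t \<circ>\<^sub>e u t)" for t
  define dE where "dE t = (1/2) * (\<gamma>1 * ipH hH (G1 t) ((Dp - Dm) *v G1 t)
                                 + \<gamma>2 * ipH hH (u t) ((Dp - Dm) *v u t))" for t
  have rates: "ipH hH (u t) (m' t) + ipH hH (G1 t) (h' t) = dE t"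
      "ipH hH ones (h' t) = 0" "ipH hH ones (m' t) = 0" if "t \<in> {0..T}" for t
    using periodic_upwind_SBP_scheme_rates[OF SBP eq_h[OF that, unfolded Let_def]
        eq_m[OF that, unfolded Let_def]]
    unfolding dE_def G1_def u_def by blast+
  have dE: "(E has_real_derivative dE t) (at t within {0..T})" if t: "t \<in> {0..T}" for t
  proof -
    have "(E has_real_derivative ipH hH (u t) (m' t) + ipH hH (G1 t) (h' t)) (at t within {0..T})"
      unfolding E_def u_def G1_def
      using has_real_derivative_shallow_water_energy[OF dh[OF t] dm[OF t]] pos[OF t]
      by (simp add: less_imp_neq[symmetric])
    then show ?thesis
      unfolding rates(1)[OF t] .
  qed
  have dE_nonpos: "dE t \<le> 0" for t
    using SBP g1 g2 unfolding dE_def periodic_upwind_SBP_def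
    by (simp add: add_nonpos_nonpos mult_nonneg_nonpos)
  have "\<exists>c. \<forall>t\<in>{0..T}. E t = c" if "\<gamma>1 = 0" "\<gamma>2 = 0"
    using dE that by (intro has_field_derivative_zero_constant) (auto simp: dE_def)
  then have "\<gamma>1 = 0 \<and> \<gamma>2 = 0 \<longrightarrow> (\<forall>t\<in>{0..T}. E t = E 0)"
    using T by force
  moreover have "((\<lambda>s. ipH hH ones (h s)) has_real_derivative 0) (at t within {0..T})
      \<and> ((\<lambda>s. ipH hH ones (m s)) has_real_derivative 0) (at t within {0..T})"
    if t: "t \<in> {0..T}" for t
    using has_real_derivative_ipH[OF dh[OF t]] has_real_derivative_ipH[OF dm[OF t]]
      rates(2,3)[OF t] by metis
  ultimately show ?thesis
    using dE dE_nonpos unfolding Let_def u_def[symmetric] G1_def[symmetric] dE_def[symmetric]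
    by blast
qed

end
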